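(* Consider 2-Choices. For any opinion $i$ and any $t\ge1$, on the event $\alpha_{t-1}(i)\le\gamma_{t-1}$, the random variable $\alpha_t(i)-\alpha_{t-1}(i)$ conditioned on $\mathcal F_{t-1}$ satisfies the one-sided $\big(\frac1n,\frac{2\alpha_{t-1}(i)^2}{n}\big)$-Bernstein condition.
   Context: **Setting.** Let $V$ be a set of $n$ vertices and $k\in\{1,\dots,n\}$. A configuration is a map $\mathsf{opn}\colon V\to[k]$. **2-Choices.** This is a synchronous process. In each round $t\ge1$, each vertex $v$ independently samples $w_1,w_2\in V$ uniformly with replacement. It sets $\mathsf{opn}_t(v)=\mathsf{opn}_{t-1}(w_1)$ if $\mathsf{opn}_{t-1}(w_1)=\mathsf{opn}_{t-1}(w_2)$, and $\mathsf{opn}_t(v)=\mathsf{opn}_{t-1}(v)$ otherwise. **Basic quantities.** - $\alpha_t(i)=|\{v:\mathsf{opn}_t(v)=i\}|/n$. - $\gamma_t=\sum_i\alpha_t(i)^2$. - $\mathcal F_t$ is generated by $\mathsf{opn}_0,\dots,\mathsf{opn}_t$. **One-sided Bernstein condition.** $X$ satisfies the one-sided $(D,s)$-Bernstein condition if $\mathbb E[e^{\lambda X}]\le\exp\big(\frac{\lambda^2 s/2}{1-\lambda D/3}\big)$ for all $\lambda\ge0$ with $\lambda D<3$. Conditioned on $\mathcal F_{t-1}$, the expectation is replaced by the conditional expectation. *)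

theory Defs
  imports "HOL-Probability.Probability"
begin

definition alpha :: "'a set \<Rightarrow> ('a \<Rightarrow> nat) \<Rightarrow> nat \<Rightarrow> real" where
  "alpha V c i = real (card {v \<in> V. c v = i}) / real (card V)"

definition gamma :: "'a set \<Rightarrow> nat \<Rightarrow> ('a \<Rightarrow> nat) \<Rightarrow> real" where
  "gamma V k c = (\<Sum>i\<in>{1..k}. (alpha V c i)\<^sup>2)"

text \<open>One synchronous round of 2-Choices started from configuration c: every vertex v
  independently samples (w1,w2) uniformly from V x V (with replacement) and adopts
  c w1 if c w1 = c w2, otherwise keeps c v. (Vertices outside V are left unchanged.)
  This is the conditional law of opn_t given F_{t-1}, where c = opn_{t-1}.\<close>
definition two_choices_step :: "'a set \<Rightarrow> ('a \<Rightarrow> nat) \<Rightarrow> ('a \<Rightarrow> nat) pmf" where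
  "two_choices_step V c =
     map_pmf (\<lambda>s v. if v \<in> V \<and> c (fst (s v)) = c (snd (s v)) then c (fst (s v)) else c v)
       (Pi_pmf V undefined (\<lambda>_. pmf_of_set (V \<times> V)))"

definition bernstein_one_sided :: "real \<Rightarrow> real \<Rightarrow> real pmf \<Rightarrow> bool" where
  "bernstein_one_sided D s p \<longleftrightarrow>
     (\<forall>l::real. l \<ge> 0 \<and> l * D < 3 \<longrightarrow>
        measure_pmf.expectation p (\<lambda>x. exp (l * x)) \<le> exp ((l\<^sup>2 * s / 2) / (1 - l * D / 3)))"

end

theory Submission
  imports Defs
begin

text \<open>Every vertex contributes independently to the change of the fraction alpha of opinion i,
  so the moment generating function of the change factorises over the vertices. A holder of i
  loses it only if it samples two agreeing vertices of another opinion, which under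
  alpha <= gamma happens with probability at least alpha (1 - alpha); any other vertex gains i
  with probability alpha^2. Bounding each factor by 1 + y <= exp y and summing, the exponent
  becomes n alpha^2 (1 - alpha) (e^x + e^-x - 2) with x = lambda/n, and
  e^x + e^-x - 2 <= x^2 / (1 - x/3) is the classical Bernstein estimate.\<close>

lemma exp_neg_le_quadratic:
  fixes x :: real
  assumes "x \<ge> 0"
  shows "exp (-x) \<le> 1 - x + x\<^sup>2 / 2"
proof -
  let ?k = "\<lambda>x::real. 1 - x + x\<^sup>2 / 2 - exp (-x)"
  have "?k 0 \<le> ?k x"
  proof (rule DERIV_nonneg_imp_nondecreasing[OF assms])
    fix y :: real
    have "-1 + y + exp (-y) \<ge> 0"
      using exp_ge_add_one_self[of "-y"] by linarith
    moreover have "DERIV ?k y :> -1 + y + exp (-y)"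
      by (auto intro!: derivative_eq_intros simp: power2_eq_square)
    ultimately show "\<exists>d. DERIV ?k y :> d \<and> d \<ge> 0" by blast
  qed
  then show ?thesis by simp
qed

lemma exp_bernstein_remainder:
  fixes x :: real
  assumes "x \<ge> 0"
  shows "(1 - x / 3) * (exp x - 1 - x) \<le> x\<^sup>2 / 2"
proof -
  let ?h = "\<lambda>x::real. x / 3 + 2 / 3 - (2 / 3) * exp x + x * exp x / 3"
  let ?g = "\<lambda>x::real. x\<^sup>2 / 2 - (1 - x / 3) * (exp x - 1 - x)"
  have h_nonneg: "?h y \<ge> 0" if "y \<ge> 0" for y
  proof -
    have "?h 0 \<le> ?h y"
    proof (rule DERIV_nonneg_imp_nondecreasing[OF that])
      fix z :: real
      have "(1 - z) * exp z \<le> exp (-z) * exp z"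
        using exp_ge_add_one_self[of "-z"] by (intro mult_right_mono) auto
      then have "1 / 3 - exp z / 3 + z * exp z / 3 \<ge> 0"
        by (simp add: exp_minus field_simps)
      moreover have "DERIV ?h z :> 1 / 3 - exp z / 3 + z * exp z / 3"
        by (auto intro!: derivative_eq_intros simp: field_simps)
      ultimately show "\<exists>d. DERIV ?h z :> d \<and> d \<ge> 0" by blast
    qed
    then show ?thesis by simp
  qed
  have "?g 0 \<le> ?g x"
  proof (rule DERIV_nonneg_imp_nondecreasing[OF assms])
    fix y :: real
    assume "0 \<le> y"
    have "DERIV ?g y :> ?h y"
      by (auto intro!: derivative_eq_intros simp: field_simps power2_eq_square)
    with h_nonneg[OF \<open>0 \<le> y\<close>] show "\<exists>d. DERIV ?g y :> d \<and> d \<ge> 0" by blast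
  qed
  then show ?thesis by simp
qed

lemma exp_plus_exp_neg_le_bernstein:
  fixes x :: real
  assumes "x \<ge> 0" "x < 3"
  shows "exp x + exp (-x) - 2 \<le> x\<^sup>2 / (1 - x / 3)"
proof -
  have pos: "0 < 1 - x / 3" and le1: "1 - x / 3 \<le> 1" using assms by auto
  have upper: "exp x - 1 - x \<le> (x\<^sup>2 / 2) / (1 - x / 3)"
    using exp_bernstein_remainder[OF assms(1)] pos by (subst pos_le_divide_eq) (auto simp: mult.commute)
  have "x\<^sup>2 / 2 * (1 - x / 3) \<le> x\<^sup>2 / 2"
    using le1 by (simp add: mult_left_le)
  then have "x\<^sup>2 / 2 \<le> (x\<^sup>2 / 2) / (1 - x / 3)"
    using pos by (subst pos_le_divide_eq) auto
  then have lower: "exp (-x) - 1 + x \<le> (x\<^sup>2 / 2) / (1 - x / 3)"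
    using exp_neg_le_quadratic[OF assms(1)] by linarith
  have "x\<^sup>2 / (1 - x / 3) = (x\<^sup>2 / 2) / (1 - x / 3) + (x\<^sup>2 / 2) / (1 - x / 3)"
    by (metis add_divide_distrib field_sum_of_halves)
  with upper lower show ?thesis by linarith
qed

lemma bernstein_exponent_le:
  fixes n a x :: real
  assumes "0 \<le> n" "0 \<le> a" "0 \<le> x" "x < 3"
  shows "n * a\<^sup>2 * (1 - a) * (exp x + exp (-x) - 2) \<le> n * a\<^sup>2 * (x\<^sup>2 / (1 - x / 3))"
proof -
  have "0 \<le> exp x + exp (-x) - 2"
    using exp_ge_add_one_self[of x] exp_ge_add_one_self[of "-x"] by linarith
  then have "0 \<le> a * (exp x + exp (-x) - 2)"
    using \<open>0 \<le> a\<close> by simp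
  then have "(1 - a) * (exp x + exp (-x) - 2) \<le> exp x + exp (-x) - 2"
    by (simp add: left_diff_distrib)
  also have "\<dots> \<le> x\<^sup>2 / (1 - x / 3)"
    using exp_plus_exp_neg_le_bernstein[OF \<open>0 \<le> x\<close> \<open>x < 3\<close>] .
  finally show ?thesis
    using \<open>0 \<le> n\<close> by (simp only: mult.assoc) (intro mult_left_mono, auto)
qed

lemma expectation_pmf_of_set_if:
  fixes p q :: real
  assumes "finite A" "A \<noteq> {}"
  shows "measure_pmf.expectation (pmf_of_set A) (\<lambda>w. if Q w then p else q)
           = q + real (card {w\<in>A. Q w}) / real (card A) * (p - q)"
proof -
  have "(\<Sum>w\<in>A. if Q w then p else q) = (\<Sum>w\<in>A. q + (if Q w then p - q else 0))"
    by (intro sum.cong) auto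
  also have "\<dots> = real (card A) * q + real (card {w\<in>A. Q w}) * (p - q)"
    using assms by (simp add: sum.distrib sum.inter_filter[symmetric])
  finally show ?thesis
    using assms by (simp add: integral_pmf_of_set field_simps)
qed

lemma card_agreeing_pairs:
  fixes V :: "'a set" and c :: "'a \<Rightarrow> nat"
  assumes "finite V" "\<forall>v\<in>V. c v \<in> {1..k}"
  shows "real (card {w\<in>V \<times> V. c (fst w) = c (snd w)}) = gamma V k c * (real (card V))\<^sup>2"
proof -
  have "{w\<in>V \<times> V. c (fst w) = c (snd w)} = (\<Union>j\<in>{1..k}. {v\<in>V. c v = j} \<times> {v\<in>V. c v = j})"
    using assms(2) by auto
  then have "card {w\<in>V \<times> V. c (fst w) = c (snd w)} = (\<Sum>j\<in>{1..k}. card {v\<in>V. c v = j} ^ 2)"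
    using assms(1) by (simp add: card_UN_disjoint card_cartesian_product power2_eq_square disjoint_iff)
  moreover have "gamma V k c * (real (card V))\<^sup>2 = (\<Sum>j\<in>{1..k}. real (card {v\<in>V. c v = j}) ^ 2)"
    using assms(1) by (cases "V = {}") (simp_all add: gamma_def alpha_def power_divide sum_distrib_right)
  ultimately show ?thesis by simp
qed

lemma card_agreeing_pairs_other_opinion:
  fixes V :: "'a set" and c :: "'a \<Rightarrow> nat"
  assumes "finite V" "\<forall>v\<in>V. c v \<in> {1..k}" "alpha V c i \<le> gamma V k c"
  shows "alpha V c i * (1 - alpha V c i) * (real (card V))\<^sup>2
           \<le> real (card {w\<in>V \<times> V. c (fst w) = c (snd w) \<and> c (fst w) \<noteq> i})"
proof -
  let ?E = "{w\<in>V \<times> V. c (fst w) = c (snd w)}"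
  let ?S = "{v\<in>V. c v = i} \<times> {v\<in>V. c v = i}"
  have split: "{w\<in>V \<times> V. c (fst w) = c (snd w) \<and> c (fst w) \<noteq> i} = ?E - ?S" and "?S \<subseteq> ?E"
    by auto
  moreover have "finite ?E" using assms(1) by simp
  moreover have "card ?S \<le> card ?E" using \<open>?S \<subseteq> ?E\<close> \<open>finite ?E\<close> by (rule card_mono[rotated])
  ultimately have "real (card (?E - ?S)) = real (card ?E) - (real (card {v\<in>V. c v = i}))\<^sup>2"
    by (simp add: card_Diff_subset card_mono finite_subset of_nat_diff
        card_cartesian_product power2_eq_square)
  moreover have "real (card {v\<in>V. c v = i}) = alpha V c i * real (card V)"
    using assms(1) by (cases "V = {}") (simp_all add: alpha_def)
  moreover have "alpha V c i * (real (card V))\<^sup>2 \<le> real (card ?E)"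
    using card_agreeing_pairs[OF assms(1,2)] assms(3) by (simp add: mult_right_mono)
  ultimately show ?thesis
    unfolding split by (simp add: algebra_simps power2_eq_square)
qed

definition opinion_gain :: "('a \<Rightarrow> nat) \<Rightarrow> nat \<Rightarrow> 'a \<Rightarrow> 'a \<times> 'a \<Rightarrow> real" where
  "opinion_gain c i v w =
     of_bool ((if c (fst w) = c (snd w) then c (fst w) else c v) = i) - of_bool (c v = i)"

lemma alpha_two_choices_diff:
  assumes "finite V"
  shows "alpha V (\<lambda>v. if v \<in> V \<and> c (fst (s v)) = c (snd (s v)) then c (fst (s v)) else c v) i
           - alpha V c i = (\<Sum>v\<in>V. opinion_gain c i v (s v)) / real (card V)"
proof -
  have card_as_sum: "real (card {v\<in>V. d v = i}) = (\<Sum>v\<in>V. if d v = i then 1 else 0)"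
    for d :: "'a \<Rightarrow> nat"
    using assms by (simp add: sum.inter_filter[symmetric])
  show ?thesis
    unfolding alpha_def card_as_sum opinion_gain_def of_bool_def
    by (simp add: sum_subtractf diff_divide_distrib)
qed

lemma mgf_two_choices_step:
  fixes l :: real
  assumes "finite V" "V \<noteq> {}"
  shows "measure_pmf.expectation (map_pmf (\<lambda>c'. alpha V c' i - alpha V c i) (two_choices_step V c))
           (\<lambda>y. exp (l * y))
         = (\<Prod>v\<in>V. measure_pmf.expectation (pmf_of_set (V \<times> V))
              (\<lambda>w. exp (l / real (card V) * opinion_gain c i v w)))"
proof -
  have "exp (l * ((\<Sum>v\<in>V. opinion_gain c i v (s v)) / real (card V)))
          = (\<Prod>v\<in>V. exp (l / real (card V) * opinion_gain c i v (s v)))" for s :: "'a \<Rightarrow> 'a \<times> 'a"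
    using assms(1) by (simp add: exp_sum[symmetric] sum_distrib_left sum_divide_distrib)
  then have "measure_pmf.expectation (map_pmf (\<lambda>c'. alpha V c' i - alpha V c i) (two_choices_step V c))
           (\<lambda>y. exp (l * y))
         = measure_pmf.expectation (Pi_pmf V undefined (\<lambda>_. pmf_of_set (V \<times> V)))
             (\<lambda>s. \<Prod>v\<in>V. exp (l / real (card V) * opinion_gain c i v (s v)))"
    using assms(1) by (simp add: two_choices_step_def alpha_two_choices_diff)
  also have "\<dots> = (\<Prod>v\<in>V. measure_pmf.expectation (pmf_of_set (V \<times> V))
              (\<lambda>w. exp (l / real (card V) * opinion_gain c i v w)))"
    using assms by (intro expectation_prod_Pi_pmf integrable_measure_pmf_finite) auto
  finally show ?thesis .
qed

lemma mgf_opinion_gain_holder: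
  fixes x :: real
  assumes "finite V" "V \<noteq> {}" "\<forall>v\<in>V. c v \<in> {1..k}" "alpha V c i \<le> gamma V k c"
    and "c v = i" "x \<ge> 0"
  shows "measure_pmf.expectation (pmf_of_set (V \<times> V)) (\<lambda>w. exp (x * opinion_gain c i v w))
           \<le> 1 + alpha V c i * (1 - alpha V c i) * (exp (-x) - 1)"
proof -
  let ?T = "{w\<in>V \<times> V. c (fst w) = c (snd w) \<and> c (fst w) \<noteq> i}"
  have "(\<lambda>w. exp (x * opinion_gain c i v w))
      = (\<lambda>w. if c (fst w) = c (snd w) \<and> c (fst w) \<noteq> i then exp (-x) else 1)"
    using \<open>c v = i\<close> by (auto simp: opinion_gain_def)
  then have mgf: "measure_pmf.expectation (pmf_of_set (V \<times> V)) (\<lambda>w. exp (x * opinion_gain c i v w))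
      = 1 + real (card ?T) / (real (card V))\<^sup>2 * (exp (-x) - 1)"
    using assms(1,2) by (simp add: expectation_pmf_of_set_if card_cartesian_product power2_eq_square)
  have "alpha V c i * (1 - alpha V c i) \<le> real (card ?T) / (real (card V))\<^sup>2"
    using card_agreeing_pairs_other_opinion[OF assms(1,3,4)] assms(1,2)
    by (simp add: pos_le_divide_eq card_gt_0_iff)
  moreover have "exp (-x) - 1 \<le> 0" using \<open>x \<ge> 0\<close> by simp
  ultimately have "real (card ?T) / (real (card V))\<^sup>2 * (exp (-x) - 1)
      \<le> alpha V c i * (1 - alpha V c i) * (exp (-x) - 1)"
    by (rule mult_right_mono_neg)
  then show ?thesis unfolding mgf by linarith
qed

lemma mgf_opinion_gain_other:
  fixes x :: real
  assumes "finite V" "V \<noteq> {}" "c v \<noteq> i"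
  shows "measure_pmf.expectation (pmf_of_set (V \<times> V)) (\<lambda>w. exp (x * opinion_gain c i v w))
           = 1 + (alpha V c i)\<^sup>2 * (exp x - 1)"
proof -
  have "(\<lambda>w. exp (x * opinion_gain c i v w)) = (\<lambda>w. if c (fst w) = i \<and> c (snd w) = i then exp x else 1)"
    using \<open>c v \<noteq> i\<close> by (auto simp: opinion_gain_def)
  moreover have "{w\<in>V \<times> V. c (fst w) = i \<and> c (snd w) = i} = {v\<in>V. c v = i} \<times> {v\<in>V. c v = i}"
    by auto
  ultimately show ?thesis
    using assms(1,2)
    by (simp add: expectation_pmf_of_set_if card_cartesian_product alpha_def power2_eq_square)
qed

lemma prod_mgf_opinion_gain_le:
  fixes x :: real
  assumes "finite V" "V \<noteq> {}" "\<forall>v\<in>V. c v \<in> {1..k}" "alpha V c i \<le> gamma V k c" "x \<ge> 0"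
  shows "(\<Prod>v\<in>V. measure_pmf.expectation (pmf_of_set (V \<times> V)) (\<lambda>w. exp (x * opinion_gain c i v w)))
           \<le> exp (real (card V) * (alpha V c i)\<^sup>2 * (1 - alpha V c i) * (exp x + exp (-x) - 2))"
proof -
  define a where "a = alpha V c i"
  define B where "B v = (if c v = i then a * (1 - a) * (exp (-x) - 1) else a\<^sup>2 * (exp x - 1))" for v
  have "measure_pmf.expectation (pmf_of_set (V \<times> V)) (\<lambda>w. exp (x * opinion_gain c i v w)) \<le> 1 + B v"
    for v
    using mgf_opinion_gain_holder[OF assms(1-4) _ assms(5)] mgf_opinion_gain_other[OF assms(1,2)]
    by (simp add: B_def a_def)
  also have "1 + B v \<le> exp (B v)" for v by simp
  finally have "(\<Prod>v\<in>V. measure_pmf.expectation (pmf_of_set (V \<times> V)) (\<lambda>w. exp (x * opinion_gain c i v w)))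
      \<le> (\<Prod>v\<in>V. exp (B v))"
    by (intro prod_mono) (auto intro: integral_nonneg_AE)
  also have "\<dots> = exp (\<Sum>v\<in>V. B v)" using assms(1) by (simp add: exp_sum)
  also have "(\<Sum>v\<in>V. B v) = real (card {v\<in>V. c v = i}) * (a * (1 - a) * (exp (-x) - 1))
      + real (card {v\<in>V. c v \<noteq> i}) * (a\<^sup>2 * (exp x - 1))"
    using assms(1) by (simp add: B_def sum.If_cases Int_def)
  also have "\<dots> = real (card V) * a\<^sup>2 * (1 - a) * (exp x + exp (-x) - 2)"
  proof -
    have holders: "real (card {v\<in>V. c v = i}) = a * real (card V)"
      using assms(1,2) by (simp add: a_def alpha_def)
    have "card {v\<in>V. c v = i} + card {v\<in>V. c v \<noteq> i} = card V"
      using assms(1) by (subst card_Un_disjoint[symmetric]) (auto intro: arg_cong[where f = card])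
    then have others: "real (card {v\<in>V. c v \<noteq> i}) = (1 - a) * real (card V)"
      using holders by (simp add: algebra_simps flip: of_nat_add)
    show ?thesis
      unfolding holders others by (simp add: algebra_simps power2_eq_square)
  qed
  finally show ?thesis by (simp add: a_def)
qed

theorem lemma4p3:
  fixes V :: "'a set" and k :: nat and c :: "'a \<Rightarrow> nat" and i :: nat
  assumes "finite V" and "V \<noteq> {}"
    and "k \<ge> 1" and "k \<le> card V"
    and "\<forall>v\<in>V. c v \<in> {1..k}"
    and "i \<in> {1..k}"
    and "alpha V c i \<le> gamma V k c"
  shows "bernstein_one_sided (1 / real (card V)) (2 * (alpha V c i)\<^sup>2 / real (card V))
           (map_pmf (\<lambda>c'. alpha V c' i - alpha V c i) (two_choices_step V c))"
  unfolding bernstein_one_sided_def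
proof (intro allI impI)
  fix l :: real
  assume l: "0 \<le> l \<and> l * (1 / real (card V)) < 3"
  define n where "n = real (card V)"
  define a where "a = alpha V c i"
  define x where "x = l / n"
  have "n > 0" using assms(1,2) by (simp add: n_def card_gt_0_iff)
  have "0 \<le> x" "x < 3" using l by (simp_all add: x_def n_def)
  have "0 \<le> a" by (simp add: a_def alpha_def)
  have "measure_pmf.expectation (map_pmf (\<lambda>c'. alpha V c' i - alpha V c i) (two_choices_step V c))
          (\<lambda>y. exp (l * y))
      = (\<Prod>v\<in>V. measure_pmf.expectation (pmf_of_set (V \<times> V)) (\<lambda>w. exp (x * opinion_gain c i v w)))"
    unfolding x_def n_def by (rule mgf_two_choices_step[OF assms(1,2)])
  also have "\<dots> \<le> exp (n * a\<^sup>2 * (1 - a) * (exp x + exp (-x) - 2))"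
    unfolding n_def a_def by (rule prod_mgf_opinion_gain_le[OF assms(1,2,5,7) \<open>0 \<le> x\<close>])
  also have "\<dots> \<le> exp (n * a\<^sup>2 * (x\<^sup>2 / (1 - x / 3)))"
    using bernstein_exponent_le[of n a x] \<open>n > 0\<close> \<open>0 \<le> a\<close> \<open>0 \<le> x\<close> \<open>x < 3\<close> by simp
  also have "n * a\<^sup>2 * (x\<^sup>2 / (1 - x / 3))
      = l\<^sup>2 * (2 * (alpha V c i)\<^sup>2 / real (card V)) / 2 / (1 - l * (1 / real (card V)) / 3)"
    using \<open>n > 0\<close> \<open>x < 3\<close> by (simp add: x_def a_def n_def field_simps power2_eq_square)
  finally show "measure_pmf.expectation (map_pmf (\<lambda>c'. alpha V c' i - alpha V c i) (two_choices_step V c))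
      (\<lambda>y. exp (l * y)) \<le> exp (l\<^sup>2 * (2 * (alpha V c i)\<^sup>2 / real (card V)) / 2 / (1 - l * (1 / real (card V)) / 3))" .
qed

end
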